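(* Let $0\le m<M$ and let $n>2$ be an integer. For integers $0\le r\le s<n$ define $$E^{BW,U}_n(r,s)=\sum_{k=r+1}^{s}\frac{M\,r}{(k-1)\,n}+\sum_{k=s+1}^{n}(M+m)\frac{r(s-1)}{(k-1)(k-2)\,n},$$ where any term of the form $0/0$ is interpreted as $0$. Let $(\mathcal{M}_1(n),\mathcal{M}_2(n))$ be a point at which $E^{BW,U}_n$ attains its maximum. Then (i) $\lim_{n\to\infty}\mathcal{M}_1(n)/n=\dfrac{e^{-1+\frac{m}{M}}M}{m+M}$; (ii) $\lim_{n\to\infty}\mathcal{M}_2(n)/n=\dfrac{M}{m+M}$; (iii) $\lim_{n\to\infty}E^{BW,U}_n(\mathcal{M}_1(n),\mathcal{M}_2(n))=\dfrac{e^{-1+\frac{m}{M}}M^2}{m+M}$.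
   Context: $E^{BW,U}_n(r,s)$ is the expected payoff, in the Best-or-Worst secretary problem with $n$ candidates where choosing the overall best pays $M$ and the overall worst pays $m$, of the strategy that rejects the first $r$ candidates, then accepts the first candidate better than all preceding ones up to the $s$-th interview, and afterwards accepts the first candidate better or worse than all preceding ones. *)

theory Defs
  imports Complex_Main
begin

text \<open>Expected payoff E^{BW,U}_n(r,s) with payoffs M (best) and m (worst).
  Division by zero yields 0 in Isabelle, matching the convention 0/0 = 0
  (numerators vanish whenever denominators do).\<close>
definition E_BWU :: "real \<Rightarrow> real \<Rightarrow> nat \<Rightarrow> nat \<Rightarrow> nat \<Rightarrow> real" where
  "E_BWU m M n r s =
     (\<Sum>k\<in>{r+1..s}. M * real r / ((real k - 1) * real n))
   + (\<Sum>k\<in>{s+1..n}. (M + m) * (real r * (real s - 1)) /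
                      ((real k - 1) * (real k - 2) * real n))"

definition is_max_point :: "real \<Rightarrow> real \<Rightarrow> nat \<Rightarrow> nat \<Rightarrow> nat \<Rightarrow> bool" where
  "is_max_point m M n r s \<longleftrightarrow> r \<le> s \<and> s < n \<and>
     (\<forall>r' s'. r' \<le> s' \<and> s' < n \<longrightarrow> E_BWU m M n r' s' \<le> E_BWU m M n r s)"

end

theory Submission
  imports Defs
begin

text \<open>With \<open>x = r/n\<close> and \<open>y = s/n\<close>, the payoff \<open>E_n(r,s)\<close> is within \<open>O(1/n)\<close> of the
  continuum payoff \<open>F(x,y) = x (M ln(y/x) + (M+m)(1-y))\<close> (\<open>E_BWU_asymp\<close>): the first sum is a harmonic sum
  squeezed between logarithms, the second one telescopes. The function \<open>F\<close> is maximal at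
  \<open>(x\<^sub>0,y\<^sub>0) = (e^(-1+m/M) M/(m+M), M/(m+M))\<close>, and its deficit \<open>M x\<^sub>0 - F(x,y)\<close> splits into
  two terms of the form \<open>b \<phi>(a/b)\<close> with \<open>\<phi>(t) = t - 1 - ln t \<ge> (\<surd>t - 1)\<^sup>2\<close>, so it controls
  \<open>(\<surd>x - \<surd>x\<^sub>0)\<^sup>2\<close> and \<open>x (\<surd>y - \<surd>y\<^sub>0)\<^sup>2\<close>. Lattice points near \<open>(n x\<^sub>0, n y\<^sub>0)\<close> show that the
  maximal payoff tends to \<open>F(x\<^sub>0,y\<^sub>0) = M x\<^sub>0\<close>; hence the scaled maximisers have vanishing
  deficit and converge to \<open>(x\<^sub>0,y\<^sub>0)\<close>.\<close>

lemma ln_diff_bounds: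
  fixes x :: real
  assumes "1 < x"
  shows "1 / x \<le> ln x - ln (x - 1)" and "ln x - ln (x - 1) \<le> 1 / (x - 1)"
proof -
  have "ln ((x - 1) / x) \<le> (x - 1) / x - 1" using assms by (intro ln_le_minus_one) simp
  then show "1 / x \<le> ln x - ln (x - 1)" using assms by (simp add: ln_div field_simps)
  have "ln (x / (x - 1)) \<le> x / (x - 1) - 1" using assms by (intro ln_le_minus_one) simp
  then show "ln x - ln (x - 1) \<le> 1 / (x - 1)" using assms by (simp add: ln_div field_simps)
qed

lemma sum_inverse_pred_bounds:
  assumes "1 \<le> r" "r \<le> s"
  shows "ln (real s) - ln (real r) \<le> (\<Sum>k\<in>{r+1..s}. 1 / (real k - 1))"
    and "(\<Sum>k\<in>{r+1..s}. 1 / (real k - 1)) \<le> ln (real s) - ln (real r) + (1 / real r - 1 / real s)"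
proof -
  have telescope: "(\<Sum>k\<in>{r+1..s}. f (real k) - f (real k - 1)) = f (real s) - f (real r)"
    for f :: "real \<Rightarrow> real"
    using sum_telescope''[OF assms(2), of "\<lambda>k. f (real k)"] assms by (simp add: of_nat_diff)
  have gt1: "1 < real k" if "k \<in> {r+1..s}" for k using that assms by auto
  show "ln (real s) - ln (real r) \<le> (\<Sum>k\<in>{r+1..s}. 1 / (real k - 1))"
    unfolding telescope[of ln, symmetric] by (intro sum_mono ln_diff_bounds(2) gt1)
  have "(\<Sum>k\<in>{r+1..s}. 1 / (real k - 1))
      \<le> (\<Sum>k\<in>{r+1..s}. (ln (real k) - ln (real k - 1)) + ((- 1 / real k) - (- 1 / (real k - 1))))"
  proof (rule sum_mono)
    fix k assume "k \<in> {r+1..s}"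
    with ln_diff_bounds(1)[OF gt1] show "1 / (real k - 1)
        \<le> (ln (real k) - ln (real k - 1)) + ((- 1 / real k) - (- 1 / (real k - 1)))"
      by force
  qed
  also have "\<dots> = ln (real s) - ln (real r) + (1 / real r - 1 / real s)"
    unfolding sum.distrib telescope[of ln] telescope[of "\<lambda>t. - 1 / t"] by simp
  finally show "(\<Sum>k\<in>{r+1..s}. 1 / (real k - 1))
      \<le> ln (real s) - ln (real r) + (1 / real r - 1 / real s)" .
qed

lemma sum_inverse_pred_pred_telescope:
  assumes "2 \<le> s" "s \<le> n"
  shows "(\<Sum>k\<in>{s+1..n}. 1 / ((real k - 1) * (real k - 2))) = 1 / (real s - 1) - 1 / (real n - 1)"
proof -
  have "(\<Sum>k\<in>{s+1..n}. 1 / ((real k - 1) * (real k - 2)))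
      = (\<Sum>k\<in>{Suc s..n}. (- 1 / (real k - 1)) - (- 1 / (real (k - 1) - 1)))"
    using assms by (intro sum.cong) (auto simp: of_nat_diff field_simps)
  also have "\<dots> = 1 / (real s - 1) - 1 / (real n - 1)"
    using sum_telescope''[OF assms(2), of "\<lambda>k. - 1 / (real k - 1)"] by simp
  finally show ?thesis .
qed

lemma sqrt_sub_sqrt_sq_le:
  fixes a b :: real
  assumes "0 < a" "0 < b"
  shows "(sqrt a - sqrt b)\<^sup>2 \<le> a - b - b * ln (a / b)"
proof -
  have "ln (a / b) = 2 * ln (sqrt a / sqrt b)"
    using assms by (simp add: ln_sqrt flip: real_sqrt_divide)
  also have "\<dots> \<le> 2 * (sqrt a / sqrt b - 1)"
    using ln_le_minus_one[of "sqrt a / sqrt b"] assms by simp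
  finally have "b * ln (a / b) \<le> b * (2 * (sqrt a / sqrt b - 1))"
    using assms by (intro mult_left_mono) auto
  also have "\<dots> = 2 * sqrt a * (b / sqrt b) - 2 * b"
    by (simp add: algebra_simps)
  also have "\<dots> = 2 * sqrt a * sqrt b - 2 * b"
    using assms by (simp add: real_div_sqrt)
  finally show ?thesis
    using assms by (simp add: power2_diff real_sqrt_mult)
qed

lemma tendsto_of_sqrt_sub_sqrt_sq:
  fixes u :: "'a \<Rightarrow> real"
  assumes "\<forall>\<^sub>F i in F. 0 \<le> u i" "0 \<le> c" "((\<lambda>i. (sqrt (u i) - sqrt c)\<^sup>2) \<longlongrightarrow> 0) F"
  shows "(u \<longlongrightarrow> c) F"
proof -
  have "((\<lambda>i. sqrt ((sqrt (u i) - sqrt c)\<^sup>2)) \<longlongrightarrow> sqrt 0) F"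
    by (intro tendsto_real_sqrt assms)
  then have "((\<lambda>i. sqrt (u i) - sqrt c) \<longlongrightarrow> 0) F"
    by (simp add: tendsto_rabs_zero_iff)
  then have "((\<lambda>i. sqrt (u i)) \<longlongrightarrow> sqrt c) F"
    by (rule LIM_zero_cancel)
  then have "((\<lambda>i. (sqrt (u i))\<^sup>2) \<longlongrightarrow> c) F"
    using tendsto_power[of _ "sqrt c" F 2] assms(2) by simp
  moreover have "\<forall>\<^sub>F i in F. (sqrt (u i))\<^sup>2 = u i"
    using assms(1) by (auto elim: eventually_mono)
  ultimately show ?thesis by (rule Lim_transform_eventually)
qed

lemma tendsto_div_of_nat_of_bounded_dist:
  fixes a :: "nat \<Rightarrow> real"
  assumes "\<And>n. \<bar>a n - c * real n\<bar> \<le> K"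
  shows "(\<lambda>n. a n / real n) \<longlonglongrightarrow> c"
proof (rule LIM_zero_cancel, rule tendsto_0_le[OF lim_inverse_n', of _ K])
  show "\<forall>\<^sub>F n in sequentially. norm (a n / real n - c) \<le> norm (1 / real n) * K"
    using eventually_gt_at_top[of 0]
  proof eventually_elim
    case (elim n)
    then have "a n / real n - c = (a n - c * real n) / real n" by (simp add: field_simps)
    then show ?case using assms[of n] elim by (simp add: divide_right_mono)
  qed
qed

lemma real_nat_floor_bounds:
  fixes t :: real
  shows "t - 1 < real (nat \<lfloor>t\<rfloor>)" and "real (nat \<lfloor>t\<rfloor>) \<le> max 0 t"
proof -
  have "real (nat \<lfloor>t\<rfloor>) = max 0 (of_int \<lfloor>t\<rfloor>)"
    by (cases "0 \<le> \<lfloor>t\<rfloor>") auto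
  then show "t - 1 < real (nat \<lfloor>t\<rfloor>)" "real (nat \<lfloor>t\<rfloor>) \<le> max 0 t"
    using real_of_int_floor_gt_diff_one[of t] of_int_floor_le[of t] by linarith+
qed

lemma grid_approximation:
  fixes x y :: real
  assumes "0 < x" "x < y" "y \<le> 1"
  obtains r s :: "nat \<Rightarrow> nat"
  where "(\<lambda>n. real (r n) / real n) \<longlonglongrightarrow> x" and "(\<lambda>n. real (s n) / real n) \<longlonglongrightarrow> y"
    and "\<forall>\<^sub>F n in sequentially. 1 \<le> r n \<and> r n \<le> s n \<and> 2 \<le> s n \<and> s n < n"
proof -
  define r where "r n = nat \<lfloor>x * real n\<rfloor>" for n
  \<comment> \<open>The shift by one keeps \<open>s n < n\<close> also when \<open>y = 1\<close>.\<close>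
  define s where "s n = nat \<lfloor>y * real n - 1\<rfloor>" for n
  have "\<bar>real (r n) - x * real n\<bar> \<le> 1" for n
    using real_nat_floor_bounds[of "x * real n"] assms(1) unfolding r_def
    by (smt (verit) mult_nonneg_nonneg of_nat_0_le_iff)
  then have r: "(\<lambda>n. real (r n) / real n) \<longlonglongrightarrow> x"
    by (rule tendsto_div_of_nat_of_bounded_dist)
  have "\<bar>real (s n) - y * real n\<bar> \<le> 2" for n
    using real_nat_floor_bounds[of "y * real n - 1"] assms unfolding s_def
    by (smt (verit) mult_nonneg_nonneg of_nat_0_le_iff)
  then have s: "(\<lambda>n. real (s n) / real n) \<longlonglongrightarrow> y"
    by (rule tendsto_div_of_nat_of_bounded_dist)
  have s_lt: "s n < n" if "0 < n" for n
  proof -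
    have "y * real n \<le> real n" using assms by (simp add: mult_left_le_one_le)
    then have "y * real n - 1 < real n" by linarith
    with that have "max 0 (y * real n - 1) < real n" by simp
    then have "real (s n) < real n"
      unfolding s_def using real_nat_floor_bounds(2)[of "y * real n - 1"] by linarith
    then show ?thesis by simp
  qed
  have "\<forall>\<^sub>F n in sequentially. 0 < real (r n) / real n"
    using order_tendstoD(1)[OF r assms(1)] .
  moreover have "\<forall>\<^sub>F n in sequentially. real (r n) / real n < real (s n) / real n"
    using order_tendstoD(1)[OF tendsto_diff[OF s r], of 0] assms(2) by simp
  ultimately have "\<forall>\<^sub>F n in sequentially. 1 \<le> r n \<and> r n \<le> s n \<and> 2 \<le> s n \<and> s n < n"
    using eventually_gt_at_top[of 0]
  proof eventually_elim
    case (elim n)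
    then have "0 < r n" and "r n < s n"
      by (simp_all add: zero_less_divide_iff divide_less_cancel)
    then show ?case using elim s_lt by simp
  qed
  with r s show thesis by (rule that)
qed

lemma E_BWU_closed_form:
  assumes "2 \<le> s" "s \<le> n"
  shows "E_BWU m M n r s = real r / real n *
    (M * (\<Sum>k\<in>{r+1..s}. 1 / (real k - 1)) + (M + m) * ((real n - real s) / (real n - 1)))"
proof -
  have s1: "real s - 1 \<noteq> 0" and n1: "real n - 1 \<noteq> 0" using assms by auto
  have "(real s - 1) * (\<Sum>k\<in>{s+1..n}. 1 / ((real k - 1) * (real k - 2)))
      = 1 - (real s - 1) / (real n - 1)"
    unfolding sum_inverse_pred_pred_telescope[OF assms] using s1 by (simp add: right_diff_distrib)
  also have "\<dots> = (real n - real s) / (real n - 1)"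
    using n1 by (simp add: field_simps)
  finally have second: "(real s - 1) * (\<Sum>k\<in>{s+1..n}. 1 / ((real k - 1) * (real k - 2)))
      = (real n - real s) / (real n - 1)" .
  have "E_BWU m M n r s = real r / real n * (M * (\<Sum>k\<in>{r+1..s}. 1 / (real k - 1))
      + (M + m) * ((real s - 1) * (\<Sum>k\<in>{s+1..n}. 1 / ((real k - 1) * (real k - 2)))))"
    unfolding E_BWU_def sum_distrib_left distrib_left
    by (intro arg_cong2[where f = "(+)"] sum.cong) (simp_all add: divide_inverse mult_ac)
  then show ?thesis unfolding second .
qed

lemma E_BWU_pos_imp:
  assumes "0 < E_BWU m M n r s" "r \<le> s"
  shows "1 \<le> r" and "2 \<le> s"
proof -
  have "E_BWU m M n r s = 0" if "r = 0 \<or> s \<le> 1"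
  proof (cases "r = 0")
    case False
    with that assms(2) have "r = 1" "s = 1" by auto
    then show ?thesis by (simp add: E_BWU_def)
  qed (simp add: E_BWU_def)
  then show "1 \<le> r" "2 \<le> s" using assms by force+
qed

definition E_BWU_asymp :: "real \<Rightarrow> real \<Rightarrow> real \<Rightarrow> real \<Rightarrow> real" where
  "E_BWU_asymp m M x y = x * (M * (ln y - ln x) + (M + m) * (1 - y))"

lemma E_BWU_asymp_scaled:
  assumes "0 < r" "0 < s" "0 < n"
  shows "E_BWU_asymp m M (real r / real n) (real s / real n)
    = real r / real n * (M * (ln (real s) - ln (real r)) + (M + m) * (1 - real s / real n))"
  using assms by (simp add: E_BWU_asymp_def ln_div)

lemma E_BWU_asymp_le_E_BWU:
  assumes "0 \<le> m" "0 \<le> M" "1 \<le> r" "r \<le> s" "2 \<le> s" "s < n"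
  shows "E_BWU_asymp m M (real r / real n) (real s / real n) \<le> E_BWU m M n r s"
proof -
  have scaled: "E_BWU_asymp m M (real r / real n) (real s / real n)
      = real r / real n * (M * (ln (real s) - ln (real r)) + (M + m) * (1 - real s / real n))"
    using assms by (intro E_BWU_asymp_scaled) auto
  have "M * (ln (real s) - ln (real r)) \<le> M * (\<Sum>k\<in>{r+1..s}. 1 / (real k - 1))"
    using assms sum_inverse_pred_bounds(1)[of r s] by (intro mult_left_mono) auto
  moreover have "(M + m) * (1 - real s / real n) \<le> (M + m) * ((real n - real s) / (real n - 1))"
    using assms by (intro mult_left_mono) (auto simp: field_simps)
  ultimately have "E_BWU_asymp m M (real r / real n) (real s / real n)
      \<le> real r / real n * (M * (\<Sum>k\<in>{r+1..s}. 1 / (real k - 1))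
        + (M + m) * ((real n - real s) / (real n - 1)))"
    unfolding scaled by (rule mult_left_mono[OF add_mono]) simp_all
  also have "\<dots> = E_BWU m M n r s"
    using assms by (simp add: E_BWU_closed_form)
  finally show ?thesis .
qed

lemma E_BWU_le_E_BWU_asymp:
  assumes "0 \<le> m" "0 \<le> M" "1 \<le> r" "r \<le> s" "2 \<le> s" "s < n"
  shows "E_BWU m M n r s \<le> E_BWU_asymp m M (real r / real n) (real s / real n) + (2 * M + m) / real n"
proof -
  have n: "0 < real n" and rn: "real r / real n \<le> 1" using assms by auto
  have "0 \<le> 1 / real s" by simp
  then have "(\<Sum>k\<in>{r+1..s}. 1 / (real k - 1)) \<le> ln (real s) - ln (real r) + 1 / real r"
    using sum_inverse_pred_bounds(2)[of r s] assms by linarith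
  then have "M * (\<Sum>k\<in>{r+1..s}. 1 / (real k - 1)) \<le> M * (ln (real s) - ln (real r) + 1 / real r)"
    using assms by (intro mult_left_mono) auto
  moreover have "(M + m) * ((real n - real s) / (real n - 1))
      \<le> (M + m) * (1 - real s / real n + 1 / real n)"
    using assms by (intro mult_left_mono) (auto simp: field_simps)
  ultimately have "E_BWU m M n r s \<le> real r / real n * (M * (ln (real s) - ln (real r) + 1 / real r)
      + (M + m) * (1 - real s / real n + 1 / real n))"
    unfolding E_BWU_closed_form[OF assms(5) less_imp_le[OF assms(6)]]
    by (rule mult_left_mono[OF add_mono]) simp_all
  also have "\<dots> = E_BWU_asymp m M (real r / real n) (real s / real n)
      + M / real n + (M + m) * (real r / real n) / real n"
    using assms by (subst E_BWU_asymp_scaled) (auto simp: field_simps)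
  also have "(M + m) * (real r / real n) / real n \<le> (M + m) / real n"
    using assms n rn by (intro divide_right_mono mult_left_le) auto
  finally show ?thesis by (simp add: add_divide_distrib)
qed

definition y_opt :: "real \<Rightarrow> real \<Rightarrow> real" where
  "y_opt m M = M / (m + M)"

definition x_opt :: "real \<Rightarrow> real \<Rightarrow> real" where
  "x_opt m M = exp (-1 + m / M) * y_opt m M"

lemma opt_bounds:
  assumes "0 \<le> m" "m < M"
  shows "0 < x_opt m M" and "x_opt m M < y_opt m M" and "y_opt m M \<le> 1"
proof -
  have "0 < y_opt m M" "y_opt m M \<le> 1" unfolding y_opt_def using assms by auto
  moreover have "exp (-1 + m / M) < 1" using assms by simp
  ultimately show "0 < x_opt m M" "x_opt m M < y_opt m M" "y_opt m M \<le> 1"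
    unfolding x_opt_def using mult_strict_right_mono[of _ 1 "y_opt m M"] by auto
qed

lemma E_BWU_asymp_at_opt:
  assumes "0 \<le> m" "0 < M"
  shows "E_BWU_asymp m M (x_opt m M) (y_opt m M) = M * x_opt m M"
proof -
  have y0: "0 < y_opt m M" unfolding y_opt_def using assms by simp
  have "ln (y_opt m M) - ln (x_opt m M) = 1 - m / M"
    unfolding x_opt_def using ln_mult[of "exp (-1 + m / M)" "y_opt m M"] y0 by simp
  moreover have "M * (1 - m / M) + (M + m) * (1 - y_opt m M) = M"
    unfolding y_opt_def using assms by (simp add: field_simps)
  ultimately show ?thesis
    unfolding E_BWU_asymp_def by simp
qed

lemma E_BWU_asymp_deficit:
  assumes "0 \<le> m" "0 < M" "0 < x" "0 < y"
  shows "M * x / y_opt m M * (sqrt y - sqrt (y_opt m M))\<^sup>2 + M * (sqrt x - sqrt (x_opt m M))\<^sup>2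
    \<le> M * x_opt m M - E_BWU_asymp m M x y"
proof -
  define x0 y0 where "x0 = x_opt m M" and "y0 = y_opt m M"
  have y0: "0 < y0" and x0: "0 < x0" unfolding x0_def x_opt_def y0_def y_opt_def using assms by auto
  have ln_x0: "ln x0 = -1 + m / M + ln y0"
    unfolding x0_def x_opt_def y0_def[symmetric] using y0 by (simp add: ln_mult)
  have "M * x / y0 * y = (m + M) * x * y"
    unfolding y0_def y_opt_def using assms by (simp add: field_simps)
  moreover have "M * x / y0 * (y - y0 - y0 * ln (y / y0)) = M * x / y0 * y - M * x - M * x * ln (y / y0)"
    using y0 by (simp add: field_simps)
  ultimately have "M * x / y0 * (y - y0 - y0 * ln (y / y0)) = (m + M) * x * y - M * x - M * x * (ln y - ln y0)"
    using assms y0 by (simp add: ln_div)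
  moreover have "M * (x0 - x - x * ln (x0 / x)) = M * x0 - M * x - M * x * (ln x0 - ln x)"
    using assms x0 by (simp add: ln_div algebra_simps)
  moreover have "M * x * (ln x0 - ln x) = M * x * (ln y0 - ln x) - M * x + m * x"
    unfolding ln_x0 using assms by (simp add: algebra_simps)
  ultimately have "M * x0 - E_BWU_asymp m M x y
      = M * x / y0 * (y - y0 - y0 * ln (y / y0)) + M * (x0 - x - x * ln (x0 / x))"
    by (simp add: E_BWU_asymp_def algebra_simps)
  moreover have "M * x / y0 * (sqrt y - sqrt y0)\<^sup>2 \<le> M * x / y0 * (y - y0 - y0 * ln (y / y0))"
    using assms y0 by (intro mult_left_mono sqrt_sub_sqrt_sq_le) auto
  moreover have "M * (sqrt x - sqrt x0)\<^sup>2 \<le> M * (x0 - x - x * ln (x0 / x))"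
    using sqrt_sub_sqrt_sq_le[of x0 x] assms x0 by (intro mult_left_mono) (auto simp: power2_commute)
  ultimately show ?thesis unfolding x0_def y0_def by linarith
qed

lemma E_BWU_asymp_le_opt:
  assumes "0 \<le> m" "0 < M" "0 < x" "0 < y"
  shows "E_BWU_asymp m M x y \<le> M * x_opt m M"
proof -
  have "0 < y_opt m M" unfolding y_opt_def using assms by simp
  then show ?thesis
    using E_BWU_asymp_deficit[OF assms] assms
    by (smt (verit) divide_nonneg_pos mult_nonneg_nonneg zero_le_power2)
qed

lemma tendsto_opt_if_E_BWU_asymp_tendsto_max:
  fixes x y :: "'a \<Rightarrow> real"
  assumes m: "0 \<le> m" and M: "0 < M" and pos: "\<forall>\<^sub>F i in F. 0 < x i \<and> 0 < y i"
    and lim: "((\<lambda>i. E_BWU_asymp m M (x i) (y i)) \<longlongrightarrow> M * x_opt m M) F"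
  shows "(x \<longlongrightarrow> x_opt m M) F" and "(y \<longlongrightarrow> y_opt m M) F"
proof -
  define x0 y0 where "x0 = x_opt m M" and "y0 = y_opt m M"
  have y0: "0 < y0" and x0: "0 < x0" unfolding x0_def x_opt_def y0_def y_opt_def using m M by auto
  define D where "D i = M * x0 - E_BWU_asymp m M (x i) (y i)" for i
  have D: "(D \<longlongrightarrow> 0) F"
    using tendsto_diff[OF tendsto_const lim, of "M * x0"] unfolding D_def x0_def by simp
  have deficit: "\<forall>\<^sub>F i in F. 0 < x i \<and> 0 < y i \<and>
      M * x i / y0 * (sqrt (y i) - sqrt y0)\<^sup>2 + M * (sqrt (x i) - sqrt x0)\<^sup>2 \<le> D i"
    using pos unfolding D_def x0_def y0_def
    by eventually_elim (use E_BWU_asymp_deficit m M in blast)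
  show x: "(x \<longlongrightarrow> x_opt m M) F"
    unfolding x0_def[symmetric]
  proof (rule tendsto_of_sqrt_sub_sqrt_sq)
    show "((\<lambda>i. (sqrt (x i) - sqrt x0)\<^sup>2) \<longlongrightarrow> 0) F"
    proof (rule tendsto_sandwich[of "\<lambda>_. 0" _ _ "\<lambda>i. D i / M"])
      show "\<forall>\<^sub>F i in F. (sqrt (x i) - sqrt x0)\<^sup>2 \<le> D i / M"
        using deficit
      proof eventually_elim
        case (elim i)
        then have "M * (sqrt (x i) - sqrt x0)\<^sup>2 \<le> D i"
          using y0 M by (smt (verit) divide_nonneg_pos mult_nonneg_nonneg zero_le_power2)
        then show ?case using M by (simp add: field_simps)
      qed
      show "((\<lambda>i. D i / M) \<longlongrightarrow> 0) F" using tendsto_divide_zero[OF D] .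
    qed auto
  qed (use pos x0 in \<open>auto elim: eventually_mono\<close>)
  show "(y \<longlongrightarrow> y_opt m M) F"
    unfolding y0_def[symmetric]
  proof (rule tendsto_of_sqrt_sub_sqrt_sq)
    show "((\<lambda>i. (sqrt (y i) - sqrt y0)\<^sup>2) \<longlongrightarrow> 0) F"
    proof (rule tendsto_sandwich[of "\<lambda>_. 0" _ _ "\<lambda>i. D i * y0 / (M * x i)"])
      show "\<forall>\<^sub>F i in F. (sqrt (y i) - sqrt y0)\<^sup>2 \<le> D i * y0 / (M * x i)"
        using deficit
      proof eventually_elim
        case (elim i)
        then have "M * x i / y0 * (sqrt (y i) - sqrt y0)\<^sup>2 \<le> D i"
          using M by (smt (verit) mult_nonneg_nonneg zero_le_power2)
        then show ?case using M y0 elim by (simp add: field_simps)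
      qed
      have "((\<lambda>i. D i * y0 / (M * x i)) \<longlongrightarrow> 0 * y0 / (M * x0)) F"
        using M x0 x unfolding x0_def by (intro tendsto_intros D) auto
      then show "((\<lambda>i. D i * y0 / (M * x i)) \<longlongrightarrow> 0) F" by simp
    qed auto
  qed (use pos y0 in \<open>auto elim: eventually_mono\<close>)
qed

lemma E_BWU_max_lower_bound:
  assumes "0 \<le> m" "0 \<le> M" "0 < x" "x < y" "y \<le> 1"
    and "\<forall>\<^sub>F n in sequentially. is_max_point m M n (r n) (s n)"
  obtains L where "L \<longlonglongrightarrow> E_BWU_asymp m M x y"
    and "\<forall>\<^sub>F n in sequentially. L n \<le> E_BWU m M n (r n) (s n)"
proof -
  obtain a b :: "nat \<Rightarrow> nat"
    where a: "(\<lambda>n. real (a n) / real n) \<longlonglongrightarrow> x" and b: "(\<lambda>n. real (b n) / real n) \<longlonglongrightarrow> y"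
      and ab: "\<forall>\<^sub>F n in sequentially. 1 \<le> a n \<and> a n \<le> b n \<and> 2 \<le> b n \<and> b n < n"
    using grid_approximation assms(3-5) .
  show thesis
  proof
    show "(\<lambda>n. E_BWU_asymp m M (real (a n) / real n) (real (b n) / real n))
        \<longlonglongrightarrow> E_BWU_asymp m M x y"
      unfolding E_BWU_asymp_def using assms(3,4) by (intro tendsto_intros a b) auto
    show "\<forall>\<^sub>F n in sequentially.
        E_BWU_asymp m M (real (a n) / real n) (real (b n) / real n) \<le> E_BWU m M n (r n) (s n)"
      using ab assms(6)
    proof eventually_elim
      case (elim n)
      then show ?case
        using E_BWU_asymp_le_E_BWU[OF assms(1,2), of "a n" "b n" n]
        unfolding is_max_point_def by force
    qed
  qed
qed

lemma E_BWU_max_point_bounds: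
  assumes "0 \<le> m" "0 < M" "is_max_point m M n r s" "0 < E_BWU m M n r s"
  shows "0 < real r / real n" and "0 < real s / real n"
    and "E_BWU m M n r s - (2 * M + m) / real n \<le> E_BWU_asymp m M (real r / real n) (real s / real n)"
    and "E_BWU_asymp m M (real r / real n) (real s / real n) \<le> M * x_opt m M"
proof -
  have valid: "1 \<le> r" "r \<le> s" "2 \<le> s" "s < n"
    using assms(3,4) E_BWU_pos_imp[of m M n r s] unfolding is_max_point_def by auto
  then show r: "0 < real r / real n" and s: "0 < real s / real n" by auto
  show "E_BWU m M n r s - (2 * M + m) / real n \<le> E_BWU_asymp m M (real r / real n) (real s / real n)"
    using E_BWU_le_E_BWU_asymp[OF assms(1) less_imp_le[OF assms(2)] valid] by simp
  show "E_BWU_asymp m M (real r / real n) (real s / real n) \<le> M * x_opt m M"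
    using E_BWU_asymp_le_opt[OF assms(1,2) r s] .
qed

lemma E_BWU_max_tendsto:
  assumes "0 \<le> m" "m < M" "\<forall>\<^sub>F n in sequentially. is_max_point m M n (r n) (s n)"
  defines "x n \<equiv> real (r n) / real n" and "y n \<equiv> real (s n) / real n"
  shows "(\<lambda>n. E_BWU m M n (r n) (s n)) \<longlonglongrightarrow> M * x_opt m M"
    and "(\<lambda>n. E_BWU_asymp m M (x n) (y n)) \<longlonglongrightarrow> M * x_opt m M"
    and "\<forall>\<^sub>F n in sequentially. 0 < x n \<and> 0 < y n"
proof -
  define e where "e n = E_BWU m M n (r n) (s n)" for n
  define C where "C = 2 * M + m"
  have M: "0 < M" using assms(1,2) by linarith
  obtain L where L: "L \<longlonglongrightarrow> M * x_opt m M" and L_le: "\<forall>\<^sub>F n in sequentially. L n \<le> e n"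
    using E_BWU_max_lower_bound[OF assms(1) less_imp_le[OF M] opt_bounds[OF assms(1,2)] assms(3)]
    unfolding E_BWU_asymp_at_opt[OF assms(1) M] e_def by blast
  have bounds: "\<forall>\<^sub>F n in sequentially. 0 < x n \<and> 0 < y n \<and> L n \<le> e n \<and>
      e n - C / real n \<le> E_BWU_asymp m M (x n) (y n) \<and> E_BWU_asymp m M (x n) (y n) \<le> M * x_opt m M"
    using assms(3) L_le order_tendstoD(1)[OF L mult_pos_pos[OF M opt_bounds(1)[OF assms(1,2)]]]
    by eventually_elim
      (use E_BWU_max_point_bounds[OF assms(1) M] in \<open>simp add: e_def x_def y_def C_def\<close>)
  then show "\<forall>\<^sub>F n in sequentially. 0 < x n \<and> 0 < y n"
    by (auto elim: eventually_mono)
  have C: "(\<lambda>n. C / real n) \<longlonglongrightarrow> 0" by (rule lim_const_over_n)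
  show "(\<lambda>n. E_BWU_asymp m M (x n) (y n)) \<longlonglongrightarrow> M * x_opt m M"
  proof (rule tendsto_sandwich[of "\<lambda>n. L n - C / real n" _ _ "\<lambda>_. M * x_opt m M"])
    show "(\<lambda>n. L n - C / real n) \<longlonglongrightarrow> M * x_opt m M" using tendsto_diff[OF L C] by simp
  qed (use bounds in \<open>auto elim: eventually_mono\<close>)
  show "(\<lambda>n. E_BWU m M n (r n) (s n)) \<longlonglongrightarrow> M * x_opt m M"
    unfolding e_def[symmetric]
  proof (rule tendsto_sandwich[of L e _ "\<lambda>n. M * x_opt m M + C / real n"])
    show "(\<lambda>n. M * x_opt m M + C / real n) \<longlonglongrightarrow> M * x_opt m M"
      using tendsto_add[OF tendsto_const C] by simp
  qed (use bounds L in \<open>auto elim: eventually_mono\<close>)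
qed

theorem theorem6:
  fixes m M :: real and M1 M2 :: "nat \<Rightarrow> nat"
  assumes "0 \<le> m" and "m < M"
    and "\<And>n. n > 2 \<Longrightarrow> is_max_point m M n (M1 n) (M2 n)"
  shows "(\<lambda>n. real (M1 n) / real n) \<longlonglongrightarrow> exp (-1 + m / M) * M / (m + M) \<and>
         (\<lambda>n. real (M2 n) / real n) \<longlonglongrightarrow> M / (m + M) \<and>
         (\<lambda>n. E_BWU m M n (M1 n) (M2 n)) \<longlonglongrightarrow> exp (-1 + m / M) * M\<^sup>2 / (m + M)"
proof -
  have M: "0 < M" using assms(1,2) by linarith
  have "\<forall>\<^sub>F n in sequentially. is_max_point m M n (M1 n) (M2 n)"
    using eventually_gt_at_top[of 2] by eventually_elim (rule assms(3))
  note max = E_BWU_max_tendsto[OF assms(1,2) this]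
  have "(\<lambda>n. real (M1 n) / real n) \<longlonglongrightarrow> x_opt m M" "(\<lambda>n. real (M2 n) / real n) \<longlonglongrightarrow> y_opt m M"
    using tendsto_opt_if_E_BWU_asymp_tendsto_max[OF assms(1) M max(3,2)] by auto
  with max(1) show ?thesis
    unfolding x_opt_def y_opt_def by (simp add: power2_eq_square mult_ac)
qed

end
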